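(* Let $G$ be a relation on a finite set $K$ with $Dom(G)=K$. (a) For $\mathbf{s}\in K_G$ there exist a $G$ basic set $B$ and $k\in\mathbb{Z}_+$ such that $s_i\in B$ and $S^i(\mathbf{s})\in B_G$ for all $i\ge k$; this $B$ is denoted $End(\mathbf{s})$, and $\omega S(\mathbf{s})\subset B_G$. (b) If $B$ is a $G$ basic set then $B_G$ is an $S$ basic set of $(K_G,S)$ and $S|_{B_G}$ is topologically transitive; moreover $B\mapsto B_G$ is a bijection from the $G$ basic sets onto the $S$ basic sets in $K_G$. (c) For $A\subset K$: $\mathcal{O}G(A)\subset A$ iff for all $\mathbf{s}\in K_G$, ($\mathbf{s}\in A_G\Leftrightarrow s_0\in A$). These conditions imply that $\mathcal{C}S(A_G)\subset A_G$, that $A_G$ is clopen in $K_G$, and that $\{\mathbf{s}:End(\mathbf{s})\subset A\}$ is open in $K_G$. (d) For every $s\in K$ there is $\mathbf{s}\in K_G$ with $s_0=s$ and $End(\mathbf{s})$ a terminal $G$ basic set. (e) For a $G$ basic set $B$ the following are equivalent: (i) $B$ is a terminal $G$ basic set; (ii) $B_G$ is a terminal $S$ basic set; (iii) $B_G$ is a visible $S$ basic set; (iv) $B_G$ is clopen in $K_G$; (v) $B_G$ is an attractor for $S$; (vi) $\{\mathbf{s}:End(\mathbf{s})=B\}$ is open in $K_G$. (f) $\{\mathbf{s}\in K_G:End(\mathbf{s})$ is a terminal $G$ basic set$\}$ is a dense open subset of $K_G$.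
   Context: $K$ is a finite set, $G\subset K\times K$ a relation, $Dom(G)=\{s:\exists t,(s,t)\in G\}$. $K^{\mathbb{Z}_+}$ carries the metric $d(\mathbf{s},\mathbf{t})=\inf\{1/(k+1): s_i=t_i\ \forall i<k\}$ and the shift $S(\mathbf{s})_i=s_{i+1}$. $K_G=\{\mathbf{s}\in K^{\mathbb{Z}_+}:(s_i,s_{i+1})\in G\ \forall i\}$, with $S$ restricted to it; for $A\subset K$, $A_G=K_G\cap A^{\mathbb{Z}_+}$. $\mathcal{O}G=\bigcup_{n\ge1}G^n$ (relational powers). $G$ basic sets are the equivalence classes of $\{s:(s,s)\in\mathcal{O}G\}$ under "$(s,t)\in\mathcal{O}G$ and $(t,s)\in\mathcal{O}G$"; a $G$ basic set $B$ is terminal if $\mathcal{O}G(B)\subset B$. For the map $S$ on the compact metric space $K_G$: $\mathcal{C}S$ is the chain relation ($(x,y)\in\mathcal{C}S$ iff for all $\epsilon>0$ there is an $\epsilon$-chain $x=x_0,\dots,x_n=y$, $n\ge1$, $d(S(x_i),x_{i+1})\le\epsilon$), $S$ basic sets are equivalence classes of chain recurrent points under mutual chain reachability, terminal means $\mathcal{C}S(B)\subset B$, $\omega S(\mathbf{s})$ is the limit set of the forward orbit, the basin of $B$ is $\operatorname{int}\{\mathbf{s}:\omega S(\mathbf{s})\subset B\}$, visible means nonempty basin, and an attractor is $\bigcap_{n\ge0}S^n(U)$ for a closed $U$ with $S(U)\subset\operatorname{int}U$. *)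

theory Defs
  imports "HOL-Analysis.Analysis"
begin

definition OG :: "('a \<times> 'a) set \<Rightarrow> ('a \<times> 'a) set" where
  "OG G = (\<Union>n\<in>{1..}. G ^^ n)"

definition G_basic :: "('a \<times> 'a) set \<Rightarrow> 'a set \<Rightarrow> bool" where
  "G_basic G B \<longleftrightarrow> (\<exists>s. (s, s) \<in> OG G \<and>
      B = {t. (t, t) \<in> OG G \<and> (s, t) \<in> OG G \<and> (t, s) \<in> OG G})"

definition G_terminal :: "('a \<times> 'a) set \<Rightarrow> 'a set \<Rightarrow> bool" where
  "G_terminal G B \<longleftrightarrow> G_basic G B \<and> OG G `` B \<subseteq> B"

definition seqdist :: "(nat \<Rightarrow> 'a) \<Rightarrow> (nat \<Rightarrow> 'a) \<Rightarrow> real" where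
  "seqdist s t = Inf {1 / (real k + 1) | k. \<forall>i<k. s i = t i}"

definition shift :: "(nat \<Rightarrow> 'a) \<Rightarrow> (nat \<Rightarrow> 'a)" where
  "shift s = (\<lambda>i. s (Suc i))"

definition KG :: "'a set \<Rightarrow> ('a \<times> 'a) set \<Rightarrow> (nat \<Rightarrow> 'a) set" where
  "KG K G = {s. (\<forall>i. s i \<in> K) \<and> (\<forall>i. (s i, s (Suc i)) \<in> G)}"

definition subG :: "'a set \<Rightarrow> ('a \<times> 'a) set \<Rightarrow> 'a set \<Rightarrow> (nat \<Rightarrow> 'a) set" where
  "subG K G A = KG K G \<inter> {s. \<forall>i. s i \<in> A}"

definition KGtop :: "'a set \<Rightarrow> ('a \<times> 'a) set \<Rightarrow> (nat \<Rightarrow> 'a) topology" where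
  "KGtop K G = Metric_space.mtopology (KG K G) seqdist"

definition chainS :: "'a set \<Rightarrow> ('a \<times> 'a) set \<Rightarrow> ((nat \<Rightarrow> 'a) \<times> (nat \<Rightarrow> 'a)) set" where
  "chainS K G = {(x, y). x \<in> KG K G \<and> y \<in> KG K G \<and>
     (\<forall>\<epsilon>>0. \<exists>n\<ge>1. \<exists>c :: nat \<Rightarrow> (nat \<Rightarrow> 'a). c 0 = x \<and> c n = y \<and>
        (\<forall>i\<le>n. c i \<in> KG K G) \<and> (\<forall>i<n. seqdist (shift (c i)) (c (Suc i)) \<le> \<epsilon>))}"

definition S_basic :: "'a set \<Rightarrow> ('a \<times> 'a) set \<Rightarrow> (nat \<Rightarrow> 'a) set \<Rightarrow> bool" where
  "S_basic K G B \<longleftrightarrow> (\<exists>x. (x, x) \<in> chainS K G \<and>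
     B = {y. (y, y) \<in> chainS K G \<and> (x, y) \<in> chainS K G \<and> (y, x) \<in> chainS K G})"

definition S_terminal :: "'a set \<Rightarrow> ('a \<times> 'a) set \<Rightarrow> (nat \<Rightarrow> 'a) set \<Rightarrow> bool" where
  "S_terminal K G B \<longleftrightarrow> S_basic K G B \<and> chainS K G `` B \<subseteq> B"

definition omegaS :: "'a set \<Rightarrow> ('a \<times> 'a) set \<Rightarrow> (nat \<Rightarrow> 'a) \<Rightarrow> (nat \<Rightarrow> 'a) set" where
  "omegaS K G s = {y \<in> KG K G. \<forall>\<epsilon>>0. \<forall>N. \<exists>n\<ge>N. seqdist ((shift ^^ n) s) y < \<epsilon>}"

definition basin :: "'a set \<Rightarrow> ('a \<times> 'a) set \<Rightarrow> (nat \<Rightarrow> 'a) set \<Rightarrow> (nat \<Rightarrow> 'a) set" where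
  "basin K G B = (KGtop K G) interior_of {s \<in> KG K G. omegaS K G s \<subseteq> B}"

definition visible :: "'a set \<Rightarrow> ('a \<times> 'a) set \<Rightarrow> (nat \<Rightarrow> 'a) set \<Rightarrow> bool" where
  "visible K G B \<longleftrightarrow> basin K G B \<noteq> {}"

definition attractor :: "'a set \<Rightarrow> ('a \<times> 'a) set \<Rightarrow> (nat \<Rightarrow> 'a) set \<Rightarrow> bool" where
  "attractor K G A \<longleftrightarrow> (\<exists>U. closedin (KGtop K G) U \<and>
      shift ` U \<subseteq> (KGtop K G) interior_of U \<and> A = (\<Inter>n. (shift ^^ n) ` U))"

definition top_transitive :: "'a set \<Rightarrow> ('a \<times> 'a) set \<Rightarrow> (nat \<Rightarrow> 'a) set \<Rightarrow> bool" where
  "top_transitive K G X \<longleftrightarrow> shift ` X \<subseteq> X \<and>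
     (\<forall>U V. openin (subtopology (KGtop K G) X) U \<longrightarrow> openin (subtopology (KGtop K G) X) V \<longrightarrow>
        U \<noteq> {} \<longrightarrow> V \<noteq> {} \<longrightarrow> (\<exists>n\<ge>1. (shift ^^ n) ` U \<inter> V \<noteq> {}))"

definition EndS :: "'a set \<Rightarrow> ('a \<times> 'a) set \<Rightarrow> (nat \<Rightarrow> 'a) \<Rightarrow> 'a set" where
  "EndS K G s = (THE B. G_basic G B \<and>
      (\<exists>k. \<forall>i\<ge>k. s i \<in> B \<and> (shift ^^ i) s \<in> subG K G B))"

end

theory Submission
  imports Defs
begin

text \<open>By finiteness of \<open>K\<close>, the states a path visits
  infinitely often are mutually reachable, so the path eventually stays in one \<open>G\<close> basic set
  \<open>End(s)\<close>. Cylinders are as large as the relation allows: the first \<open>m\<close> states of a path can be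
  continued by any path starting at a \<open>G\<^sup>+\<close>-successor of the \<open>m\<close>-th state. Consequently a
  fine \<open>\<epsilon>\<close>-chain of the shift from \<open>x\<close> to \<open>y\<close> amounts to a single orbit starting close to \<open>x\<close>
  and landing on \<open>y\<close>, which reduces chain recurrence and chain reachability for the shift to
  \<open>G\<^sup>+\<close>-reachability; this gives (b) and (c). A successor of \<open>a\<close> with the fewest successors lies
  in a terminal basic set, so every cylinder contains a point that ends in a periodic orbit inside a
  terminal basic set. This gives (d) and (f), and for a non-terminal \<open>B\<close> it produces, in every
  cylinder, points ending outside \<open>B\<^sub>G\<close>, which refutes each of (ii)--(vi).\<close>

subsection \<open>The metric on sequences\<close>

lemma agree_below_iff_le_first_difference:
  fixes s t :: "nat \<Rightarrow> 'a"
  assumes "s \<noteq> t"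
  shows "(\<forall>i<m. s i = t i) \<longleftrightarrow> m \<le> (LEAST i. s i \<noteq> t i)"
proof -
  have "\<exists>i. s i \<noteq> t i" using assms by auto
  from LeastI_ex[of "\<lambda>i. s i \<noteq> t i", OF this] not_less_Least[of _ "\<lambda>i. s i \<noteq> t i"]
  show ?thesis by (meson le_less_trans not_le)
qed

lemma seqdist_eq:
  "seqdist s t = (if s = t then 0 else 1 / (real (LEAST i. s i \<noteq> t i) + 1))"
proof (cases "s = t")
  case True
  have "seqdist s t = Inf {1 / (real k + 1) |k. True}"
    using True by (simp add: seqdist_def)
  also have "\<dots> = 0"
  proof (rule cInf_eq_non_empty)
    fix e :: real assume "\<And>x. x \<in> {1 / (real k + 1) |k. True} \<Longrightarrow> e \<le> x"
    then have "e \<le> inverse (real (Suc n))" for n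
      by (metis (mono_tags, lifting) add.commute inverse_eq_divide mem_Collect_eq of_nat_Suc)
    then show "e \<le> 0"
      by (metis leI reals_Archimedean not_less)
  qed auto
  finally show ?thesis using True by simp
next
  case False
  define p where "p = (LEAST i. s i \<noteq> t i)"
  have "{1 / (real k + 1) |k. \<forall>i<k. s i = t i} = {1 / (real k + 1) |k. k \<le> p}"
    using agree_below_iff_le_first_difference[OF False] by (simp add: p_def)
  then have "seqdist s t = 1 / (real p + 1)"
    unfolding seqdist_def by (intro cInf_eq_minimum) (auto simp: frac_le)
  then show ?thesis using False by (simp add: p_def)
qed

lemma seqdist_le_iff: "seqdist s t \<le> 1 / (real m + 1) \<longleftrightarrow> (\<forall>i<m. s i = t i)"
  by (cases "s = t")
     (simp_all add: seqdist_eq agree_below_iff_le_first_difference frac_le_eq field_simps)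

lemma seqdist_less_iff: "seqdist s t < 1 / (real m + 1) \<longleftrightarrow> (\<forall>i\<le>m. s i = t i)"
proof (cases "s = t")
  case False
  have "(\<forall>i\<le>m. s i = t i) \<longleftrightarrow> (\<forall>i<Suc m. s i = t i)" by (simp add: less_Suc_eq_le)
  with False show ?thesis
    by (simp add: seqdist_eq agree_below_iff_le_first_difference field_simps Suc_le_eq)
qed (simp add: seqdist_eq)

lemma seqdist_nonneg: "seqdist s t \<ge> 0"
  by (simp add: seqdist_eq)

lemma seqdist_commute: "seqdist s t = seqdist t s"
  by (simp add: seqdist_eq eq_commute)

lemma seqdist_eq_0_iff: "seqdist s t = 0 \<longleftrightarrow> s = t"
  by (simp add: seqdist_eq add_pos_nonneg)

lemma seqdist_triangle: "seqdist x z \<le> seqdist x y + seqdist y z"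
proof (cases "x = z")
  case False
  define p where "p = (LEAST i. x i \<noteq> z i)"
  have "x p \<noteq> z p"
    using False LeastI_ex[of "\<lambda>i. x i \<noteq> z i"] by (auto simp: p_def)
  then have "seqdist x y \<ge> 1 / (real p + 1) \<or> seqdist y z \<ge> 1 / (real p + 1)"
    using seqdist_less_iff[of x y p] seqdist_less_iff[of y z p] by force
  moreover have "seqdist x z = 1 / (real p + 1)" using False by (simp add: seqdist_eq p_def)
  ultimately show ?thesis using seqdist_nonneg[of x y] seqdist_nonneg[of y z] by linarith
qed (simp add: seqdist_eq add_nonneg_nonneg)

lemma Metric_space_seqdist: "Metric_space M seqdist"
  by unfold_locales (auto simp: seqdist_nonneg seqdist_commute seqdist_eq_0_iff seqdist_triangle)

lemma topspace_KGtop [simp]: "topspace (KGtop K G) = KG K G"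
  unfolding KGtop_def using Metric_space.topspace_mtopology[OF Metric_space_seqdist] .

lemma openin_KGtop:
  "openin (KGtop K G) U \<longleftrightarrow> U \<subseteq> KG K G \<and>
     (\<forall>x\<in>U. \<exists>m. \<forall>t\<in>KG K G. (\<forall>i<m. t i = x i) \<longrightarrow> t \<in> U)"
proof -
  interpret Metric_space "KG K G" seqdist by (rule Metric_space_seqdist)
  have ball_in_cylinder: "\<exists>m. \<forall>t\<in>KG K G. (\<forall>i<m. t i = x i) \<longrightarrow> t \<in> mball x r"
    if "x \<in> KG K G" "r > 0" for x r
  proof -
    obtain m where "inverse (real (Suc m)) < r" using reals_Archimedean \<open>r > 0\<close> by blast
    then have "1 / (real m + 1) < r" by (simp add: inverse_eq_divide add.commute)
    then show ?thesis
      using that by (intro exI[of _ m]) (auto simp: seqdist_commute dest!: seqdist_le_iff[THEN iffD2])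
  qed
  have cylinder_in_ball: "mball x (1 / (real m + 1)) \<subseteq> {t \<in> KG K G. \<forall>i<m. t i = x i}" for x m
    by (auto simp: seqdist_less_iff)
  have local_iff: "(\<exists>r>0. mball x r \<subseteq> U) \<longleftrightarrow> (\<exists>m. \<forall>t\<in>KG K G. (\<forall>i<m. t i = x i) \<longrightarrow> t \<in> U)"
    if x: "x \<in> KG K G" for x
  proof
    assume "\<exists>r>0. mball x r \<subseteq> U"
    then obtain r where "r > 0" "mball x r \<subseteq> U" by blast
    moreover obtain m where "\<forall>t\<in>KG K G. (\<forall>i<m. t i = x i) \<longrightarrow> t \<in> mball x r"
      using ball_in_cylinder[OF x \<open>r > 0\<close>] by blast
    ultimately show "\<exists>m. \<forall>t\<in>KG K G. (\<forall>i<m. t i = x i) \<longrightarrow> t \<in> U" by blast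
  next
    assume "\<exists>m. \<forall>t\<in>KG K G. (\<forall>i<m. t i = x i) \<longrightarrow> t \<in> U"
    then obtain m where "\<forall>t\<in>KG K G. (\<forall>i<m. t i = x i) \<longrightarrow> t \<in> U" by blast
    then have "mball x (1 / (real m + 1)) \<subseteq> U" using cylinder_in_ball[of x m] by blast
    then show "\<exists>r>0. mball x r \<subseteq> U" by (intro exI[of _ "1 / (real m + 1)"]) simp
  qed
  show ?thesis
  proof (cases "U \<subseteq> KG K G")
    case True
    then have "(\<forall>x. x \<in> U \<longrightarrow> (\<exists>r>0. mball x r \<subseteq> U)) \<longleftrightarrow>
        (\<forall>x\<in>U. \<exists>m. \<forall>t\<in>KG K G. (\<forall>i<m. t i = x i) \<longrightarrow> t \<in> U)"
      using local_iff by (simp add: Ball_def subset_iff)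
    then show ?thesis using True by (simp add: KGtop_def openin_mtopology)
  qed (simp add: KGtop_def openin_mtopology)
qed

subsection \<open>Basic sets of a relation\<close>

lemma OG_eq_trancl: "OG G = G\<^sup>+"
proof -
  have "OG G = (\<Union>n\<in>{0<..}. G ^^ n)"
    by (simp add: OG_def Suc_le_eq atLeast_def greaterThan_def)
  then show ?thesis by (auto simp: trancl_power)
qed

definition G_class :: "('a \<times> 'a) set \<Rightarrow> 'a \<Rightarrow> 'a set" where
  "G_class G b = {t. (t, t) \<in> G\<^sup>+ \<and> (b, t) \<in> G\<^sup>+ \<and> (t, b) \<in> G\<^sup>+}"

lemma G_basic_iff: "G_basic G B \<longleftrightarrow> (\<exists>b. (b, b) \<in> G\<^sup>+ \<and> B = G_class G b)"
  unfolding G_basic_def OG_eq_trancl G_class_def ..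

lemma G_terminal_iff: "G_terminal G B \<longleftrightarrow> G_basic G B \<and> G\<^sup>+ `` B \<subseteq> B"
  unfolding G_terminal_def OG_eq_trancl ..

lemma G_class_self: "(b, b) \<in> G\<^sup>+ \<Longrightarrow> b \<in> G_class G b"
  by (simp add: G_class_def)

lemma G_basic_G_class: "(b, b) \<in> G\<^sup>+ \<Longrightarrow> G_basic G (G_class G b)"
  unfolding G_basic_iff by blast

lemma G_basic_eq_G_class: "G_basic G B \<Longrightarrow> b \<in> B \<Longrightarrow> B = G_class G b"
  unfolding G_basic_iff G_class_def by (auto intro: trancl_trans)

lemma G_basic_unique: "G_basic G B \<Longrightarrow> G_basic G B' \<Longrightarrow> b \<in> B \<Longrightarrow> b \<in> B' \<Longrightarrow> B = B'"
  using G_basic_eq_G_class by metis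

lemma G_basic_nonempty: "G_basic G B \<Longrightarrow> B \<noteq> {}"
  unfolding G_basic_iff using G_class_self by fastforce

lemma G_basic_trancl: "G_basic G B \<Longrightarrow> b \<in> B \<Longrightarrow> c \<in> B \<Longrightarrow> (b, c) \<in> G\<^sup>+"
  using G_basic_eq_G_class[of G B b] unfolding G_class_def by blast

lemma G_basic_mutual:
  "G_basic G B \<Longrightarrow> b \<in> B \<Longrightarrow> (b, c) \<in> G\<^sup>+ \<Longrightarrow> (c, b) \<in> G\<^sup>+ \<Longrightarrow> c \<in> B"
  using G_basic_eq_G_class[of G B b] unfolding G_class_def by (auto intro: trancl_trans)

lemma G_basic_between:
  assumes B: "G_basic G B" and "b \<in> B" "c \<in> B" "(b, t) \<in> G\<^sup>*" "(t, c) \<in> G\<^sup>*"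
  shows "t \<in> B"
proof -
  have "(b, t) \<in> G\<^sup>+" using G_basic_trancl[OF B, of b b] assms by (blast intro: trancl_rtrancl_trancl)
  moreover have "(t, b) \<in> G\<^sup>+" using G_basic_trancl[OF B, of c b] assms by (blast intro: rtrancl_trancl_trancl)
  ultimately show ?thesis using G_basic_mutual[OF B] assms by blast
qed

lemma funpow_shift: "(shift ^^ n) s = (\<lambda>i. s (i + n))"
  by (induction n arbitrary: s) (auto simp: shift_def)

definition prepend :: "nat \<Rightarrow> (nat \<Rightarrow> 'a) \<Rightarrow> (nat \<Rightarrow> 'a) \<Rightarrow> nat \<Rightarrow> 'a" where
  "prepend n w y = (\<lambda>i. if i < n then w i else y (i - n))"

lemma funpow_shift_prepend [simp]: "(shift ^^ n) (prepend n w y) = y"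
  by (simp add: funpow_shift prepend_def)

lemma KG_trancl: "s \<in> KG K G \<Longrightarrow> i < j \<Longrightarrow> (s i, s j) \<in> G\<^sup>+"
proof (induction j)
  case (Suc j)
  then have "(s j, s (Suc j)) \<in> G" by (simp add: KG_def)
  with Suc show ?case by (cases "i = j") (auto intro: trancl_into_trancl)
qed simp

lemma KG_rtrancl: "s \<in> KG K G \<Longrightarrow> i \<le> j \<Longrightarrow> (s i, s j) \<in> G\<^sup>*"
  using KG_trancl[of s K G i j] by (cases "i = j") auto

lemma funpow_shift_KG: "s \<in> KG K G \<Longrightarrow> (shift ^^ n) s \<in> KG K G"
  by (simp add: KG_def funpow_shift)

lemma subG_iff: "s \<in> subG K G A \<longleftrightarrow> s \<in> KG K G \<and> (\<forall>i. s i \<in> A)"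
  by (simp add: subG_def)

lemma funpow_shift_subG: "s \<in> subG K G A \<Longrightarrow> (shift ^^ n) s \<in> subG K G A"
  by (simp add: subG_iff funpow_shift_KG) (simp add: funpow_shift)

lemma subG_between:
  assumes B: "G_basic G B" and s: "s \<in> KG K G"
    and "\<forall>i\<le>m. s i \<in> B" and "(shift ^^ n) s \<in> subG K G B" and "m \<le> n"
  shows "s \<in> subG K G B"
proof -
  have tail: "s (i + n) \<in> B" for i using assms(4) by (simp add: subG_iff funpow_shift)
  have "s i \<in> B" for i
  proof (cases "i \<le> m")
    case False
    show ?thesis
    proof (cases "i \<le> n")
      case True
      then show ?thesis
        using G_basic_between[OF B, of "s m" "s n"] KG_rtrancl[OF s] tail[of 0] assms(3) False
        by simp
    qed (use tail[of "i - n"] in simp)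
  qed (use assms(3) in blast)
  with s show ?thesis by (simp add: subG_iff)
qed

lemma eventually_in_G_basic_unique:
  assumes "G_basic G B" "G_basic G B'"
    and "\<forall>\<^sub>F i in sequentially. s i \<in> B" "\<forall>\<^sub>F i in sequentially. s i \<in> B'"
  shows "B = B'"
proof -
  obtain i where "s i \<in> B" "s i \<in> B'"
    using eventually_happens[OF eventually_conj[OF assms(3,4)]] by auto
  then show ?thesis using G_basic_unique[OF assms(1,2)] by blast
qed

locale markov_shift =
  fixes K :: "'a set" and G :: "('a \<times> 'a) set"
  assumes finite_K: "finite K" and G_subset: "G \<subseteq> K \<times> K" and Domain_G: "Domain G = K"
begin

lemma edge_in_K: "(a, b) \<in> G \<Longrightarrow> a \<in> K \<and> b \<in> K"
  using G_subset by auto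

lemma trancl_in_K: "(a, b) \<in> G\<^sup>+ \<Longrightarrow> a \<in> K \<and> b \<in> K"
  using trancl_subset_Sigma[OF G_subset] by auto

lemma KG_I: "(\<And>i. (s i, s (Suc i)) \<in> G) \<Longrightarrow> s \<in> KG K G"
  by (auto simp: KG_def dest: edge_in_K)

lemma exists_KG_starting_at: assumes "a \<in> K" shows "\<exists>y\<in>KG K G. y 0 = a"
proof -
  define next_of where "next_of = (\<lambda>a. SOME b. (a, b) \<in> G)"
  have next_of: "b \<in> K \<Longrightarrow> (b, next_of b) \<in> G" for b
    unfolding next_of_def using Domain_G by (auto intro: someI)
  define y where "y n = (next_of ^^ n) a" for n
  have "y n \<in> K" for n
    by (induction n) (use assms next_of edge_in_K in \<open>auto simp: y_def\<close>)
  then have "y \<in> KG K G" by (intro KG_I) (simp add: y_def next_of)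
  then show ?thesis by (intro bexI[of _ y]) (simp_all add: y_def)
qed

lemma prepend_KG:
  assumes "\<forall>i<n. (w i, w (Suc i)) \<in> G" and "w n = y 0" and y: "y \<in> KG K G"
  shows "prepend n w y \<in> KG K G"
proof (rule KG_I)
  fix i
  consider "Suc i < n" | "Suc i = n" | "i \<ge> n" by linarith
  then show "(prepend n w y i, prepend n w y (Suc i)) \<in> G"
  proof cases
    case 3
    then have "Suc i - n = Suc (i - n)" by simp
    with 3 y show ?thesis by (simp add: prepend_def KG_def)
  qed (use assms in \<open>auto simp: prepend_def\<close>)
qed

lemma splice_KG:
  assumes x: "x \<in> KG K G" and "(x m, y 0) \<in> G\<^sup>+" and y: "y \<in> KG K G"
  shows "\<exists>t\<in>KG K G. \<exists>n>m. (\<forall>i\<le>m. t i = x i) \<and> (shift ^^ n) t = y"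
proof -
  obtain l w where l: "l > 0" "w 0 = x m" "w l = y 0" "\<forall>i<l. (w i, w (Suc i)) \<in> G"
    using assms(2) by (auto simp: trancl_power relpow_fun_conv)
  define w' where "w' i = (if i \<le> m then x i else w (i - m))" for i
  have "\<forall>i<m + l. (w' i, w' (Suc i)) \<in> G"
  proof (intro allI impI)
    fix i assume i: "i < m + l"
    consider "i < m" | "i = m" | "i > m" by linarith
    then show "(w' i, w' (Suc i)) \<in> G"
    proof cases
      case 1 then show ?thesis using x by (simp add: w'_def KG_def)
    next
      case 3
      then have "Suc i - m = Suc (i - m)" "i - m < l" using i by auto
      with 3 l(4) show ?thesis by (simp add: w'_def)
    qed (use l in \<open>auto simp: w'_def\<close>)
  qed
  moreover have "w' (m + l) = y 0" using l by (simp add: w'_def)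
  ultimately have "prepend (m + l) w' y \<in> KG K G" using prepend_KG y by blast
  moreover have "\<forall>i\<le>m. prepend (m + l) w' y i = x i" using l by (simp add: prepend_def w'_def)
  ultimately show ?thesis using l by (intro bexI[of _ "prepend (m + l) w' y"] exI[of _ "m + l"]) auto
qed

lemma periodic_point_in_subG:
  assumes B: "G_basic G B" and u: "u \<in> B"
  shows "\<exists>p\<in>subG K G B. p 0 = u \<and> (\<exists>q>0. (shift ^^ q) p = p)"
proof -
  obtain q w where q: "q > 0" "w 0 = u" "w q = u" "\<forall>i<q. (w i, w (Suc i)) \<in> G"
    using G_basic_trancl[OF B u u] by (auto simp: trancl_power relpow_fun_conv)
  define p where "p i = w (i mod q)" for i
  have "(p i, p (Suc i)) \<in> G" for i
  proof -
    have "(w (i mod q), w (Suc (i mod q))) \<in> G" using q by simp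
    then show ?thesis using q by (cases "Suc (i mod q) = q") (auto simp: p_def mod_Suc)
  qed
  then have p: "p \<in> KG K G" by (rule KG_I)
  have "p i \<in> B" for i
  proof -
    have "1 * Suc i \<le> q * Suc i" using q(1) by (intro mult_le_mono1) simp
    then have "i \<le> q * Suc i" by simp
    moreover have "p (q * Suc i) = u" "p 0 = u" using q by (simp_all add: p_def)
    ultimately show ?thesis
      using G_basic_between[OF B u u] KG_rtrancl[OF p, of 0 i] KG_rtrancl[OF p, of i "q * Suc i"]
      by simp
  qed
  moreover have "(shift ^^ q) p = p" by (rule ext) (simp add: funpow_shift p_def)
  ultimately show ?thesis using p q by (intro bexI[of _ p]) (auto simp: subG_iff p_def)
qed

text \<open>Among the successors of \<open>a\<close>, one with the fewest successors lies in a terminal basic set.\<close>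

lemma reaches_G_terminal:
  assumes a: "a \<in> K"
  shows "\<exists>B u. G_terminal G B \<and> u \<in> B \<and> (a, u) \<in> G\<^sup>+"
proof -
  define f where "f t = card (G\<^sup>+ `` {t})" for t
  obtain a1 where "(a, a1) \<in> G" using Domain_G a by blast
  then obtain t where t: "(a, t) \<in> G\<^sup>+" and t_min: "\<And>t'. (a, t') \<in> G\<^sup>+ \<Longrightarrow> f t \<le> f t'"
    using ex_has_least_nat[of "\<lambda>t. (a, t) \<in> G\<^sup>+" a1 f] by blast
  have "finite (G\<^sup>+ `` {x})" for x
    by (rule finite_subset[OF _ finite_K]) (use trancl_in_K in blast)
  then have same: "G\<^sup>+ `` {v} = G\<^sup>+ `` {t}" if "(t, v) \<in> G\<^sup>+" for v
    using that t_min[of v] t card_seteq[of "G\<^sup>+ `` {t}" "G\<^sup>+ `` {v}"]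
    by (auto simp: f_def intro: trancl_trans)
  obtain u where "(t, u) \<in> G" using Domain_G trancl_in_K[OF t] by blast
  then have tu: "(t, u) \<in> G\<^sup>+" by simp
  have returns: "(v, u) \<in> G\<^sup>+" if "(u, v) \<in> G\<^sup>+" for v
    using same[OF trancl_trans[OF tu that]] tu by blast
  have uu: "(u, u) \<in> G\<^sup>+" using same[OF tu] tu by blast
  have "G\<^sup>+ `` G_class G u \<subseteq> G_class G u"
    using returns by (auto simp: G_class_def intro: trancl_trans)
  then show ?thesis using G_basic_G_class[OF uu] G_class_self[OF uu] trancl_trans[OF t tu]
    by (auto simp: G_terminal_iff)
qed

text \<open>The states visited infinitely often are pairwise \<open>G\<^sup>+\<close>-related, and by finiteness of \<open>K\<close>
  they are eventually the only ones visited.\<close>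

lemma eventually_in_G_basic:
  assumes s: "s \<in> KG K G"
  shows "\<exists>B. G_basic G B \<and> (\<forall>\<^sub>F i in sequentially. s i \<in> B)"
proof -
  define R where "R = {a \<in> K. infinite {i. s i = a}}"
  have "{i. s i \<notin> R} = (\<Union>a\<in>K - R. {i. s i = a})" using s by (auto simp: R_def KG_def)
  then have "finite {i. s i \<notin> R}" using finite_K by (auto simp: R_def)
  then obtain k where "{i. s i \<notin> R} \<subseteq> {..<k}" using finite_nat_bounded by blast
  then have "\<forall>i\<ge>k. s i \<in> R" by (meson lessThan_iff mem_Collect_eq not_le subsetD)
  then have eventually_R: "\<forall>\<^sub>F i in sequentially. s i \<in> R"
    by (auto simp: eventually_sequentially)
  have R_trancl: "(a, b) \<in> G\<^sup>+" if a: "a \<in> R" and b: "b \<in> R" for a b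
  proof -
    obtain j where j: "s j = a"
      using a not_finite_existsD[of "\<lambda>i. s i = a"] by (auto simp: R_def)
    obtain i where "i > j" "s i = b"
      using b by (auto simp: R_def infinite_nat_iff_unbounded)
    then show ?thesis using KG_trancl[OF s] j by blast
  qed
  obtain a where a: "a \<in> R" using eventually_happens[OF eventually_R] by auto
  have "R \<subseteq> G_class G a" using R_trancl a by (auto simp: G_class_def)
  then show ?thesis using G_basic_G_class[OF R_trancl[OF a a]] eventually_R
    by (intro exI[of _ "G_class G a"] conjI) (auto elim: eventually_mono)
qed

lemma EndS_condition_iff_eventually:
  assumes s: "s \<in> KG K G"
  shows "(\<exists>k. \<forall>i\<ge>k. s i \<in> B \<and> (shift ^^ i) s \<in> subG K G B) \<longleftrightarrow> (\<forall>\<^sub>F i in sequentially. s i \<in> B)"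
  unfolding eventually_sequentially
  using funpow_shift_KG[OF s] by (auto simp: subG_iff funpow_shift)

lemma EndS_unique:
  "s \<in> KG K G \<Longrightarrow> \<exists>!B. G_basic G B \<and> (\<exists>k. \<forall>i\<ge>k. s i \<in> B \<and> (shift ^^ i) s \<in> subG K G B)"
  unfolding EndS_condition_iff_eventually
proof -
  assume "s \<in> KG K G"
  then obtain B where "G_basic G B" "\<forall>\<^sub>F i in sequentially. s i \<in> B"
    using eventually_in_G_basic by blast
  then show "\<exists>!B. G_basic G B \<and> (\<forall>\<^sub>F i in sequentially. s i \<in> B)"
    using eventually_in_G_basic_unique by (intro ex1I[of _ B]) blast+
qed

lemma
  assumes "s \<in> KG K G"
  shows G_basic_EndS: "G_basic G (EndS K G s)"
    and eventually_in_EndS: "\<forall>\<^sub>F i in sequentially. s i \<in> EndS K G s"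
  using theI'[OF EndS_unique[OF assms]] EndS_condition_iff_eventually[OF assms] unfolding EndS_def by blast+

lemma EndS_eqI:
  "s \<in> KG K G \<Longrightarrow> G_basic G B \<Longrightarrow> \<forall>\<^sub>F i in sequentially. s i \<in> B \<Longrightarrow> EndS K G s = B"
  using G_basic_EndS eventually_in_EndS eventually_in_G_basic_unique by blast

lemma EndS_subG: "s \<in> subG K G B \<Longrightarrow> G_basic G B \<Longrightarrow> EndS K G s = B"
  by (rule EndS_eqI) (auto simp: subG_iff)

lemma EndS_funpow_shift: "s \<in> KG K G \<Longrightarrow> EndS K G ((shift ^^ n) s) = EndS K G s"
  by (rule EndS_eqI[OF funpow_shift_KG G_basic_EndS])
     (auto simp: funpow_shift intro: sequentially_offset eventually_in_EndS)

lemma omegaS_subset_EndS: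
  assumes s: "s \<in> KG K G"
  shows "omegaS K G s \<subseteq> subG K G (EndS K G s)"
proof
  fix y assume y: "y \<in> omegaS K G s"
  obtain k where k: "\<forall>i\<ge>k. s i \<in> EndS K G s"
    using eventually_in_EndS[OF s] by (auto simp: eventually_sequentially)
  have "y j \<in> EndS K G s" for j
  proof -
    have "(0::real) < 1 / (real j + 1)" by simp
    then obtain n where "n \<ge> k" "seqdist ((shift ^^ n) s) y < 1 / (real j + 1)"
      using y unfolding omegaS_def by blast
    then have "(shift ^^ n) s j = y j" by (simp add: seqdist_less_iff)
    then have "y j = s (j + n)" by (simp add: funpow_shift)
    then show ?thesis using k \<open>n \<ge> k\<close> by simp
  qed
  with y show "y \<in> subG K G (EndS K G s)" by (simp add: subG_iff omegaS_def)
qed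

lemma periodic_point_in_omegaS:
  assumes p: "p \<in> KG K G" and t: "(shift ^^ n) t = p" and q: "q > 0" "(shift ^^ q) p = p"
  shows "p \<in> omegaS K G t"
proof -
  have "(shift ^^ (j * q)) p = p" for j
    by (induction j) (simp_all add: funpow_add q(2))
  then have "(shift ^^ (N * q + n)) t = p" for N by (simp add: funpow_add t)
  moreover have "N * 1 \<le> N * q + n" for N
    using q(1) by (intro trans_le_add1 mult_le_mono2) simp
  ultimately show ?thesis using p unfolding omegaS_def by (fastforce simp: seqdist_eq)
qed

subsection \<open>The chain relation of the shift\<close>

text \<open>An \<open>\<epsilon>\<close>-chain from \<open>x\<close> to \<open>y\<close> with \<open>\<epsilon> < 1/(m+1)\<close> can be read off as a single orbit
  that starts in the \<open>m\<close>-cylinder of \<open>x\<close> and lands exactly on \<open>y\<close>.\<close>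

definition approaches :: "(nat \<Rightarrow> 'a) \<Rightarrow> (nat \<Rightarrow> 'a) \<Rightarrow> bool" where
  "approaches x y \<longleftrightarrow>
     (\<forall>m. \<exists>z\<in>KG K G. \<exists>n>0. (\<forall>i<m. z i = x i) \<and> (shift ^^ n) z = y)"

lemma chainS_if_approaches:
  assumes x: "x \<in> KG K G" and y: "y \<in> KG K G" and "approaches x y"
  shows "(x, y) \<in> chainS K G"
  unfolding chainS_def
proof (clarsimp simp: x y)
  fix e :: real assume "e > 0"
  then obtain m where m: "1 / (real m + 1) < e"
    by (metis reals_Archimedean of_nat_Suc add.commute inverse_eq_divide)
  obtain z n where z: "z \<in> KG K G" "n > 0" "\<forall>i<Suc m. z i = x i" "(shift ^^ n) z = y"
    using assms(3) unfolding approaches_def by blast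
  define c where "c i = (if i = 0 then x else (shift ^^ i) z)" for i
  have "seqdist (shift x) (shift z) \<le> 1 / (real m + 1)"
    using z(3) by (simp add: seqdist_le_iff shift_def)
  then have "seqdist (shift (c i)) (c (Suc i)) \<le> e" for i
    using m \<open>e > 0\<close> by (auto simp: c_def seqdist_eq)
  moreover have "c i \<in> KG K G" for i using x funpow_shift_KG[OF z(1)] by (simp add: c_def)
  ultimately show "\<exists>n\<ge>Suc 0. \<exists>c. c 0 = x \<and> c n = y \<and> (\<forall>i\<le>n. c i \<in> KG K G) \<and>
      (\<forall>i<n. seqdist (shift (c i)) (c (Suc i)) \<le> e)"
    using z by (intro exI[of _ n] conjI exI[of _ c]) (auto simp: c_def)
qed

lemma approaches_if_chainS:
  assumes xy: "(x, y) \<in> chainS K G"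
  shows "approaches x y"
  unfolding approaches_def
proof
  fix m
  obtain n c where n: "n \<ge> 1" and c: "c 0 = x" "c n = y" "\<forall>i\<le>n. c i \<in> KG K G"
    "\<forall>i<n. seqdist (shift (c i)) (c (Suc i)) \<le> 1 / (real (Suc m) + 1)"
    using xy unfolding chainS_def by (auto elim!: allE[of _ "1 / (real (Suc m) + 1)"])
  have step: "c (Suc i) j = c i (Suc j)" if "i < n" "j \<le> m" for i j
  proof -
    have "seqdist (shift (c i)) (c (Suc i)) \<le> 1 / (real (Suc m) + 1)" using c(4) that by blast
    then have "\<forall>j<Suc m. shift (c i) j = c (Suc i) j" by (simp only: seqdist_le_iff)
    then show ?thesis using that by (simp add: shift_def)
  qed
  have c_x: "c i j = x (i + j)" if "i \<le> n" "i + j \<le> Suc m" for i j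
    using that
  proof (induction i arbitrary: j)
    case (Suc i)
    then show ?case using step[of i j] by simp
  qed (simp add: c)
  define w where "w i = c i 0" for i
  have "\<forall>i<n. (w i, w (Suc i)) \<in> G"
    using c(3) step[of _ 0] by (auto simp: w_def KG_def)
  moreover have "w n = y 0" "y \<in> KG K G" using c by (auto simp: w_def)
  ultimately have z: "prepend n w y \<in> KG K G" by (rule prepend_KG)
  have "prepend n w y i = x i" if "i < m" for i
  proof (cases "i < n")
    case True
    then show ?thesis using c_x[of i 0] that by (simp add: prepend_def w_def)
  next
    case False
    then show ?thesis using c_x[of n "i - n"] that c(2) by (simp add: prepend_def)
  qed
  with z n show "\<exists>z\<in>KG K G. \<exists>n>0. (\<forall>i<m. z i = x i) \<and> (shift ^^ n) z = y"
    by (intro bexI[of _ "prepend n w y"] exI[of _ n]) auto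
qed

lemma chainS_iff_approaches:
  "(x, y) \<in> chainS K G \<longleftrightarrow> x \<in> KG K G \<and> y \<in> KG K G \<and> approaches x y"
  using chainS_if_approaches approaches_if_chainS by (auto simp: chainS_def)

lemma chainS_if_trancl:
  assumes x: "x \<in> KG K G" and y: "y \<in> KG K G" and "\<And>m. (x m, y 0) \<in> G\<^sup>+"
  shows "(x, y) \<in> chainS K G"
  unfolding chainS_iff_approaches approaches_def
proof (intro conjI x y allI)
  fix m
  obtain t n where "t \<in> KG K G" "n > m" "\<forall>i\<le>m. t i = x i" "(shift ^^ n) t = y"
    using splice_KG[OF x assms(3) y] by blast
  then show "\<exists>z\<in>KG K G. \<exists>n>0. (\<forall>i<m. z i = x i) \<and> (shift ^^ n) z = y"
    by (intro bexI[of _ t] exI[of _ n]) auto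
qed

lemma chainS_trancl_start:
  assumes "(x, y) \<in> chainS K G"
  shows "(x 0, y j) \<in> G\<^sup>+"
proof -
  obtain z n where z: "z \<in> KG K G" "n > 0" "\<forall>i<1. z i = x i" "(shift ^^ n) z = y"
    using assms unfolding chainS_iff_approaches approaches_def by blast
  then show ?thesis using KG_trancl[OF z(1), of 0 "j + n"] by (auto simp: funpow_shift)
qed

lemma chainS_returns:
  assumes "(y, x) \<in> chainS K G"
  shows "(y j, x 0) \<in> G\<^sup>+ \<or> (\<exists>i<j. y j = x i)"
proof -
  obtain z n where z: "z \<in> KG K G" "n > 0" "\<forall>i<Suc j. z i = y i" "(shift ^^ n) z = x"
    using assms unfolding chainS_iff_approaches approaches_def by blast
  have z_x: "z (i + n) = x i" for i using z(4) by (auto simp: funpow_shift)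
  show ?thesis
  proof (cases "j < n")
    case True
    then show ?thesis using KG_trancl[OF z(1) True] z(3) z_x[of 0] by simp
  next
    case False
    then show ?thesis using z(2,3) z_x[of "j - n"] by (intro disjI2 exI[of _ "j - n"]) auto
  qed
qed

subsection \<open>Basic sets of the shift\<close>

lemma subG_G_basic_nonempty: "G_basic G B \<Longrightarrow> subG K G B \<noteq> {}"
  using G_basic_nonempty periodic_point_in_subG by blast

lemma chainS_subG_G_basic:
  assumes B: "G_basic G B" and "x \<in> subG K G B" "y \<in> subG K G B"
  shows "(x, y) \<in> chainS K G"
  using assms G_basic_trancl[OF B] by (intro chainS_if_trancl) (auto simp: subG_iff)

lemma chainS_class_eq_subG:
  assumes B: "G_basic G B" and x: "x \<in> subG K G B"
  shows "{y. (y, y) \<in> chainS K G \<and> (x, y) \<in> chainS K G \<and> (y, x) \<in> chainS K G} = subG K G B"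
proof (intro set_eqI iffI)
  fix y
  assume "y \<in> {y. (y, y) \<in> chainS K G \<and> (x, y) \<in> chainS K G \<and> (y, x) \<in> chainS K G}"
  then have xy: "(x, y) \<in> chainS K G" and yx: "(y, x) \<in> chainS K G" by auto
  have x_B: "x i \<in> B" for i using x by (simp add: subG_iff)
  have "y j \<in> B" for j
    using chainS_returns[OF yx, of j] G_basic_mutual[OF B x_B chainS_trancl_start[OF xy]] x_B by auto
  with xy show "y \<in> subG K G B" by (simp add: subG_iff chainS_def)
qed (use chainS_subG_G_basic[OF B] x in blast)

lemma S_basic_subG: "G_basic G B \<Longrightarrow> S_basic K G (subG K G B)"
  unfolding S_basic_def
  using subG_G_basic_nonempty chainS_class_eq_subG chainS_subG_G_basic by blast

lemma chainS_recurrent_trancl: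
  assumes "(x, x) \<in> chainS K G"
  shows "(x j, x 0) \<in> G\<^sup>+"
proof (induction j rule: less_induct)
  case (less j)
  then show ?case using chainS_returns[OF assms, of j] by auto
qed

lemma S_basic_imp_subG:
  assumes "S_basic K G C"
  shows "\<exists>B. G_basic G B \<and> C = subG K G B"
proof -
  obtain x where xx: "(x, x) \<in> chainS K G"
    and C: "C = {y. (y, y) \<in> chainS K G \<and> (x, y) \<in> chainS K G \<and> (y, x) \<in> chainS K G}"
    using assms unfolding S_basic_def by blast
  have x: "x \<in> KG K G" using xx by (simp add: chainS_def)
  have returns: "(x j, x 0) \<in> G\<^sup>+" for j by (rule chainS_recurrent_trancl[OF xx])
  have starts: "(x 0, x j) \<in> G\<^sup>+" for j
    using returns[of 0] KG_trancl[OF x, of 0 j] by (cases j) auto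
  have "x \<in> subG K G (G_class G (x 0))"
    using x returns starts by (auto simp: subG_iff G_class_def intro: trancl_trans)
  then show ?thesis
    using chainS_class_eq_subG[OF G_basic_G_class[OF returns]] C G_basic_G_class[OF returns] by blast
qed

lemma bij_betw_subG: "bij_betw (subG K G) {B. G_basic G B} {C. S_basic K G C}"
proof (rule bij_betw_imageI)
  show "inj_on (subG K G) {B. G_basic G B}"
  proof (rule inj_onI)
    fix B B' assume B: "B \<in> {B. G_basic G B}" and B': "B' \<in> {B. G_basic G B}"
      and eq: "subG K G B = subG K G B'"
    obtain x where x: "x \<in> subG K G B" using subG_G_basic_nonempty B by blast
    then have "x \<in> subG K G B'" using eq by simp
    with x have "x 0 \<in> B" "x 0 \<in> B'" by (simp_all add: subG_iff)
    then show "B = B'" using G_basic_unique[of G B B' "x 0"] B B' by simp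
  qed
  show "subG K G ` {B. G_basic G B} = {C. S_basic K G C}"
    by (auto simp: image_iff dest: S_basic_imp_subG intro: S_basic_subG)
qed

lemma shift_image_subG: assumes B: "G_basic G B" shows "shift ` subG K G B = subG K G B"
proof
  show "shift ` subG K G B \<subseteq> subG K G B"
    using funpow_shift_subG[of _ K G B 1] by auto
  show "subG K G B \<subseteq> shift ` subG K G B"
  proof
    fix y assume y: "y \<in> subG K G B"
    have y_B: "y i \<in> B" for i using y by (simp add: subG_iff)
    obtain b where b: "(y 0, b) \<in> G\<^sup>*" "(b, y 0) \<in> G"
      using tranclD2[OF G_basic_trancl[OF B y_B y_B]] by blast
    have "b \<in> B" using G_basic_between[OF B y_B y_B b(1)] b(2) by blast
    define x where "x i = (if i = 0 then b else y (i - 1))" for i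
    have "(x i, x (Suc i)) \<in> G" for i
      using b y by (cases i) (auto simp: x_def subG_iff KG_def)
    then have "x \<in> subG K G B"
      using \<open>b \<in> B\<close> y_B by (auto simp: subG_iff x_def intro: KG_I)
    moreover have "shift x = y" by (auto simp: shift_def x_def)
    ultimately show "y \<in> shift ` subG K G B" by blast
  qed
qed

lemma top_transitive_subG:
  assumes B: "G_basic G B"
  shows "top_transitive K G (subG K G B)"
  unfolding top_transitive_def
proof (intro conjI allI impI)
  show "shift ` subG K G B \<subseteq> subG K G B" using shift_image_subG[OF B] by simp
  fix U V
  assume U: "openin (subtopology (KGtop K G) (subG K G B)) U"
    and V: "openin (subtopology (KGtop K G) (subG K G B)) V" and "U \<noteq> {}" "V \<noteq> {}"
  then obtain x y where x: "x \<in> U" and y: "y \<in> V" by blast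
  obtain T where T: "openin (KGtop K G) T" "U = T \<inter> subG K G B"
    using U by (auto simp: openin_subtopology)
  have y_B: "y \<in> subG K G B" using V y by (auto simp: openin_subtopology)
  have x_B: "x \<in> subG K G B" and "x \<in> T" using x T by auto
  then obtain m where m: "\<forall>t\<in>KG K G. (\<forall>i<m. t i = x i) \<longrightarrow> t \<in> T"
    using T(1) by (auto simp: openin_KGtop)
  have "(x m, y 0) \<in> G\<^sup>+" using G_basic_trancl[OF B] x_B y_B by (simp add: subG_iff)
  then obtain t n where t: "t \<in> KG K G" "n > m" "\<forall>i\<le>m. t i = x i" "(shift ^^ n) t = y"
    using splice_KG[of x m y] x_B y_B by (auto simp: subG_iff)
  have "t \<in> subG K G B"
    using subG_between[OF B t(1), of m n] t x_B y_B by (simp add: subG_iff)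
  moreover have "t \<in> T" using m t by auto
  ultimately have "y \<in> (shift ^^ n) ` U \<inter> V" using T(2) t(4) y by blast
  then show "\<exists>n\<ge>1. (shift ^^ n) ` U \<inter> V \<noteq> {}" using t(2) by (intro exI[of _ n]) auto
qed

lemma KG_stays_in_invariant:
  "G\<^sup>+ `` A \<subseteq> A \<Longrightarrow> s \<in> KG K G \<Longrightarrow> s k \<in> A \<Longrightarrow> k \<le> i \<Longrightarrow> s i \<in> A"
  using KG_trancl[of s K G k i] by (cases "k = i") auto

lemma invariant_iff_subG_initial:
  "(G\<^sup>+ `` A \<subseteq> A) \<longleftrightarrow> (\<forall>s\<in>KG K G. s \<in> subG K G A \<longleftrightarrow> s 0 \<in> A)"
proof
  assume "G\<^sup>+ `` A \<subseteq> A"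
  then show "\<forall>s\<in>KG K G. s \<in> subG K G A \<longleftrightarrow> s 0 \<in> A"
    using KG_stays_in_invariant[of A _ 0] by (auto simp: subG_iff)
next
  assume subG_A: "\<forall>s\<in>KG K G. s \<in> subG K G A \<longleftrightarrow> s 0 \<in> A"
  show "G\<^sup>+ `` A \<subseteq> A"
  proof
    fix b assume "b \<in> G\<^sup>+ `` A"
    then obtain a where a: "a \<in> A" "(a, b) \<in> G\<^sup>+" by blast
    obtain x where x: "x \<in> KG K G" "x 0 = a" using exists_KG_starting_at trancl_in_K[OF a(2)] by blast
    obtain y where y: "y \<in> KG K G" "y 0 = b" using exists_KG_starting_at trancl_in_K[OF a(2)] by blast
    obtain t n where t: "t \<in> KG K G" "\<forall>i\<le>0. t i = x i" "(shift ^^ n) t = y"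
      using splice_KG[of x 0 y] x y a by auto
    then have "t \<in> subG K G A" using subG_A x a by auto
    then have "t (0 + n) \<in> A" by (simp add: subG_iff)
    then show "b \<in> A" using fun_cong[OF t(3), of 0] y by (simp add: funpow_shift)
  qed
qed

lemma chainS_image_invariant_subG:
  assumes inv: "G\<^sup>+ `` A \<subseteq> A"
  shows "chainS K G `` subG K G A \<subseteq> subG K G A"
proof
  fix y assume "y \<in> chainS K G `` subG K G A"
  then obtain x where x: "x \<in> subG K G A" and xy: "(x, y) \<in> chainS K G" by blast
  have "(x 0, y j) \<in> G\<^sup>+" for j by (rule chainS_trancl_start[OF xy])
  then have "y j \<in> A" for j using inv x by (auto simp: subG_iff)
  with xy show "y \<in> subG K G A" by (simp add: subG_iff chainS_def)
qed

lemma clopen_invariant_subG: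
  assumes "G\<^sup>+ `` A \<subseteq> A"
  shows "openin (KGtop K G) (subG K G A)" "closedin (KGtop K G) (subG K G A)"
proof -
  have subG_A: "s \<in> subG K G A \<longleftrightarrow> s 0 \<in> A" if "s \<in> KG K G" for s
    using assms that unfolding invariant_iff_subG_initial by blast
  show "openin (KGtop K G) (subG K G A)"
    unfolding openin_KGtop
    by (intro conjI ballI exI[of _ 1]) (auto simp: subG_A, auto simp: subG_iff)
  show "closedin (KGtop K G) (subG K G A)"
    unfolding closedin_def topspace_KGtop openin_KGtop
    by (intro conjI ballI exI[of _ 1]) (auto simp: subG_A, auto simp: subG_iff)
qed

lemma openin_EndS_subset_invariant:
  assumes inv: "G\<^sup>+ `` A \<subseteq> A"
  shows "openin (KGtop K G) {s \<in> KG K G. EndS K G s \<subseteq> A}"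
  unfolding openin_KGtop
proof (intro conjI ballI)
  fix x assume "x \<in> {s \<in> KG K G. EndS K G s \<subseteq> A}"
  then have x: "x \<in> KG K G" and x_A: "EndS K G x \<subseteq> A" by auto
  obtain k where k: "x k \<in> EndS K G x"
    using eventually_happens[OF eventually_in_EndS[OF x]] by auto
  show "\<exists>m. \<forall>t\<in>KG K G. (\<forall>i<m. t i = x i) \<longrightarrow> t \<in> {s \<in> KG K G. EndS K G s \<subseteq> A}"
  proof (intro exI[of _ "Suc k"] ballI impI)
    fix t assume t: "t \<in> KG K G" "\<forall>i<Suc k. t i = x i"
    then have "t k \<in> A" using k x_A by auto
    obtain N where "\<forall>i\<ge>N. t i \<in> EndS K G t"
      using eventually_in_EndS[OF t(1)] by (auto simp: eventually_sequentially)
    then have "t (max k N) \<in> EndS K G t" by simp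
    moreover have "t (max k N) \<in> A" using KG_stays_in_invariant[OF inv t(1) \<open>t k \<in> A\<close>] by simp
    ultimately have "EndS K G t \<subseteq> A"
      using G_basic_trancl[OF G_basic_EndS[OF t(1)]] inv by blast
    with t show "t \<in> {s \<in> KG K G. EndS K G s \<subseteq> A}" by blast
  qed
qed auto

subsection \<open>Terminal basic sets\<close>

lemma cylinder_meets_EndS:
  assumes x: "x \<in> KG K G" and B: "G_basic G B" and "u \<in> B" and "(x m, u) \<in> G\<^sup>+"
  shows "\<exists>t\<in>KG K G. (\<forall>i\<le>m. t i = x i) \<and> EndS K G t = B \<and>
     (\<exists>n q p. p \<in> subG K G B \<and> (shift ^^ n) t = p \<and> q > 0 \<and> (shift ^^ q) p = p)"
proof -
  obtain p q where p: "p \<in> subG K G B" "p 0 = u" "q > 0" "(shift ^^ q) p = p"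
    using periodic_point_in_subG[OF B \<open>u \<in> B\<close>] by blast
  then obtain t n where t: "t \<in> KG K G" "\<forall>i\<le>m. t i = x i" "(shift ^^ n) t = p"
    using splice_KG[OF x, of m p] assms(4) by (auto simp: subG_iff)
  have "EndS K G t = B" using EndS_funpow_shift[OF t(1), of n] EndS_subG[OF p(1) B] t(3) by simp
  with t p show ?thesis by blast
qed

lemma cylinder_meets_terminal:
  assumes x: "x \<in> KG K G"
  shows "\<exists>B. G_terminal G B \<and> (\<exists>t\<in>KG K G. (\<forall>i\<le>m. t i = x i) \<and> EndS K G t = B \<and>
     (\<exists>n q p. p \<in> subG K G B \<and> (shift ^^ n) t = p \<and> q > 0 \<and> (shift ^^ q) p = p))"
proof -
  obtain B u where "G_terminal G B" "u \<in> B" "(x m, u) \<in> G\<^sup>+"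
    using reaches_G_terminal[of "x m"] x by (auto simp: KG_def)
  then show ?thesis using cylinder_meets_EndS[OF x] by (auto simp: G_terminal_iff)
qed

lemma exists_KG_EndS_terminal: "a \<in> K \<Longrightarrow> \<exists>x\<in>KG K G. x 0 = a \<and> G_terminal G (EndS K G x)"
  using exists_KG_starting_at cylinder_meets_terminal[of _ 0] by fastforce

lemma cylinder_escapes_nonterminal:
  assumes B: "G_basic G B" and "\<not> G_terminal G B" and x: "x \<in> KG K G"
  shows "\<exists>t\<in>KG K G. (\<forall>i\<le>m. t i = x i) \<and> EndS K G t \<noteq> B \<and>
     (\<exists>n q p. p \<notin> subG K G B \<and> (shift ^^ n) t = p \<and> q > 0 \<and> (shift ^^ q) p = p \<and>
        p \<in> omegaS K G t)"
proof -
  obtain B' t n q p where B': "G_terminal G B'" and t: "t \<in> KG K G" "\<forall>i\<le>m. t i = x i"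
    "EndS K G t = B'" "p \<in> subG K G B'" "(shift ^^ n) t = p" "q > 0" "(shift ^^ q) p = p"
    using cylinder_meets_terminal[OF x, of m] by blast
  have "B' \<noteq> B" using B' assms(2) by blast
  then have "p \<notin> subG K G B"
    using G_basic_unique[OF B, of B' "p 0"] B' t(4) by (auto simp: subG_iff G_terminal_iff)
  moreover have "p \<in> omegaS K G t"
    using periodic_point_in_omegaS t by (simp add: subG_iff)
  ultimately show ?thesis using t \<open>B' \<noteq> B\<close> by blast
qed

lemma G_terminal_iff_S_terminal:
  assumes B: "G_basic G B"
  shows "G_terminal G B \<longleftrightarrow> S_terminal K G (subG K G B)"
proof
  assume "G_terminal G B"
  then show "S_terminal K G (subG K G B)"
    unfolding S_terminal_def
    using S_basic_subG[OF B] chainS_image_invariant_subG by (auto simp: G_terminal_iff)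
next
  assume S: "S_terminal K G (subG K G B)"
  show "G_terminal G B"
  proof (rule ccontr)
    assume "\<not> G_terminal G B"
    then obtain b c where bc: "b \<in> B" "(b, c) \<in> G\<^sup>+" "c \<notin> B"
      using B by (auto simp: G_terminal_iff)
    obtain x where x: "x \<in> subG K G B" using subG_G_basic_nonempty[OF B] by blast
    obtain y where y: "y \<in> KG K G" "y 0 = c" using exists_KG_starting_at trancl_in_K[OF bc(2)] by blast
    have "(x i, c) \<in> G\<^sup>+" for i
      using G_basic_trancl[OF B, of "x i" b] x bc by (auto simp: subG_iff intro: trancl_trans)
    then have "(x, y) \<in> chainS K G" using x y by (intro chainS_if_trancl) (auto simp: subG_iff)
    then have "y \<in> subG K G B" using S x unfolding S_terminal_def by blast
    then show False using y bc by (auto simp: subG_iff)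
  qed
qed

lemma G_terminal_iff_visible:
  assumes B: "G_basic G B"
  shows "G_terminal G B \<longleftrightarrow> visible K G (subG K G B)"
proof
  assume "G_terminal G B"
  then have "openin (KGtop K G) (subG K G B)"
    using clopen_invariant_subG by (auto simp: G_terminal_iff)
  moreover have "omegaS K G s \<subseteq> subG K G B" if "s \<in> subG K G B" for s
    using omegaS_subset_EndS[of s] EndS_subG[OF that B] that by (simp add: subG_iff)
  then have "subG K G B \<subseteq> {s \<in> KG K G. omegaS K G s \<subseteq> subG K G B}"
    by (auto simp: subG_def)
  ultimately have "subG K G B \<subseteq> basin K G (subG K G B)"
    unfolding basin_def by (rule interior_of_maximal[rotated])
  then show "visible K G (subG K G B)"
    using subG_G_basic_nonempty[OF B] unfolding visible_def by blast
next
  assume "visible K G (subG K G B)"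
  then obtain x T where T: "openin (KGtop K G) T" "x \<in> T"
    "T \<subseteq> {s \<in> KG K G. omegaS K G s \<subseteq> subG K G B}"
    unfolding visible_def basin_def interior_of_def by blast
  then obtain m where m: "\<forall>t\<in>KG K G. (\<forall>i<m. t i = x i) \<longrightarrow> t \<in> T"
    by (auto simp: openin_KGtop)
  show "G_terminal G B"
  proof (rule ccontr)
    assume "\<not> G_terminal G B"
    then obtain t p where t: "t \<in> KG K G" "\<forall>i\<le>m. t i = x i" and p: "p \<notin> subG K G B" "p \<in> omegaS K G t"
      using cylinder_escapes_nonterminal[OF B, of x m] T by blast
    then have "t \<in> T" using m by auto
    then show False using T(3) p by blast
  qed
qed

lemma G_terminal_iff_clopen:
  assumes B: "G_basic G B"
  shows "G_terminal G B \<longleftrightarrow> openin (KGtop K G) (subG K G B) \<and> closedin (KGtop K G) (subG K G B)"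
proof
  assume "G_terminal G B"
  then show "openin (KGtop K G) (subG K G B) \<and> closedin (KGtop K G) (subG K G B)"
    using clopen_invariant_subG by (auto simp: G_terminal_iff)
next
  assume "openin (KGtop K G) (subG K G B) \<and> closedin (KGtop K G) (subG K G B)"
  moreover obtain x where x: "x \<in> subG K G B" using subG_G_basic_nonempty[OF B] by blast
  ultimately obtain m where m: "\<forall>t\<in>KG K G. (\<forall>i<m. t i = x i) \<longrightarrow> t \<in> subG K G B"
    by (auto simp: openin_KGtop)
  show "G_terminal G B"
  proof (rule ccontr)
    assume "\<not> G_terminal G B"
    then obtain t where "t \<in> KG K G" "\<forall>i\<le>m. t i = x i" "EndS K G t \<noteq> B"
      using cylinder_escapes_nonterminal[OF B, of x m] x by (auto simp: subG_iff)
    then show False using m EndS_subG[OF _ B] by auto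
  qed
qed

lemma periodic_point_in_iterated_images:
  assumes "shift ` U \<subseteq> U" and "t \<in> U" and "(shift ^^ n) t = p" and "q > 0" "(shift ^^ q) p = p"
  shows "p \<in> (\<Inter>j. (shift ^^ j) ` U)"
proof
  fix j
  have U: "(shift ^^ k) t \<in> U" for k
    by (induction k) (use assms(1,2) in auto)
  have period: "(shift ^^ (i * q)) p = p" for i
    by (induction i) (simp_all add: funpow_add assms(5))
  have "j * 1 \<le> j * q" using assms(4) by (intro mult_le_mono2) simp
  then have "j + (j * q + n - j) = j * q + n" by linarith
  then have "(shift ^^ j) ((shift ^^ (j * q + n - j)) t) = (shift ^^ (j * q)) ((shift ^^ n) t)"
    by (metis funpow_add comp_apply)
  also have "\<dots> = p" using assms(3) period by simp
  finally show "p \<in> (shift ^^ j) ` U" using U by (metis image_eqI)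
qed

lemma G_terminal_iff_attractor:
  assumes B: "G_basic G B"
  shows "G_terminal G B \<longleftrightarrow> attractor K G (subG K G B)"
proof
  assume "G_terminal G B"
  then have "openin (KGtop K G) (subG K G B)" "closedin (KGtop K G) (subG K G B)"
    using G_terminal_iff_clopen[OF B] by auto
  moreover have "(shift ^^ n) ` subG K G B = subG K G B" for n
    by (induction n) (simp_all add: image_image[symmetric] shift_image_subG[OF B])
  ultimately show "attractor K G (subG K G B)"
    unfolding attractor_def using shift_image_subG[OF B]
    by (intro exI[of _ "subG K G B"]) (simp add: interior_of_openin)
next
  assume "attractor K G (subG K G B)"
  then obtain U where U: "shift ` U \<subseteq> KGtop K G interior_of U"
    and eq: "subG K G B = (\<Inter>n. (shift ^^ n) ` U)" unfolding attractor_def by blast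
  have U_inv: "shift ` U \<subseteq> U" using subset_trans[OF U interior_of_subset] .
  obtain x where x: "x \<in> subG K G B" using subG_G_basic_nonempty[OF B] by blast
  then have "x \<in> (shift ^^ 0) ` U" unfolding eq by (rule INT_D) simp
  then have "shift x \<in> KGtop K G interior_of U" using U by auto
  then obtain T where T: "openin (KGtop K G) T" "shift x \<in> T" "T \<subseteq> U"
    unfolding interior_of_def by blast
  then obtain m where m: "\<forall>t\<in>KG K G. (\<forall>i<m. t i = shift x i) \<longrightarrow> t \<in> T"
    by (auto simp: openin_KGtop)
  show "G_terminal G B"
  proof (rule ccontr)
    assume "\<not> G_terminal G B"
    moreover have "shift x \<in> KG K G" using funpow_shift_subG[OF x, of 1] by (simp add: subG_iff)
    ultimately obtain t n q p where t: "t \<in> KG K G" "\<forall>i\<le>m. t i = shift x i"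
      and p: "p \<notin> subG K G B" "(shift ^^ n) t = p" "q > 0" "(shift ^^ q) p = p"
      using cylinder_escapes_nonterminal[OF B] by blast
    have "t \<in> U" using m t T(3) by auto
    then show False using periodic_point_in_iterated_images[OF U_inv _ p(2-4)] p(1) eq by blast
  qed
qed

lemma G_terminal_iff_openin_EndS_eq:
  assumes B: "G_basic G B"
  shows "G_terminal G B \<longleftrightarrow> openin (KGtop K G) {s \<in> KG K G. EndS K G s = B}"
proof
  assume "G_terminal G B"
  moreover have "EndS K G s = B" if s: "s \<in> KG K G" and "EndS K G s \<subseteq> B" for s
  proof -
    obtain b where "b \<in> EndS K G s" using G_basic_nonempty[OF G_basic_EndS[OF s]] by blast
    then show ?thesis using G_basic_unique[OF G_basic_EndS[OF s] B] that(2) by blast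
  qed
  then have "{s \<in> KG K G. EndS K G s = B} = {s \<in> KG K G. EndS K G s \<subseteq> B}" by auto
  ultimately show "openin (KGtop K G) {s \<in> KG K G. EndS K G s = B}"
    using openin_EndS_subset_invariant by (simp add: G_terminal_iff)
next
  assume op: "openin (KGtop K G) {s \<in> KG K G. EndS K G s = B}"
  obtain x where x: "x \<in> subG K G B" using subG_G_basic_nonempty[OF B] by blast
  then have "x \<in> {s \<in> KG K G. EndS K G s = B}" using EndS_subG[OF _ B] by (simp add: subG_iff)
  with op obtain m where m: "\<forall>t\<in>KG K G. (\<forall>i<m. t i = x i) \<longrightarrow> EndS K G t = B"
    unfolding openin_KGtop by fastforce
  show "G_terminal G B"
  proof (rule ccontr)
    assume "\<not> G_terminal G B"
    then obtain t where "t \<in> KG K G" "\<forall>i\<le>m. t i = x i" "EndS K G t \<noteq> B"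
      using cylinder_escapes_nonterminal[OF B, of x m] x by (auto simp: subG_iff)
    then show False using m by auto
  qed
qed

lemma openin_EndS_terminal: "openin (KGtop K G) {s \<in> KG K G. G_terminal G (EndS K G s)}"
  unfolding openin_KGtop
proof (intro conjI ballI)
  fix x assume "x \<in> {s \<in> KG K G. G_terminal G (EndS K G s)}"
  then have x: "x \<in> KG K G" and T: "G_terminal G (EndS K G x)" by auto
  then have "openin (KGtop K G) {s \<in> KG K G. EndS K G s = EndS K G x}"
    using G_terminal_iff_openin_EndS_eq[OF G_basic_EndS[OF x]] by blast
  with x obtain m where "\<forall>t\<in>KG K G. (\<forall>i<m. t i = x i) \<longrightarrow> EndS K G t = EndS K G x"
    unfolding openin_KGtop by fastforce
  then show "\<exists>m. \<forall>t\<in>KG K G. (\<forall>i<m. t i = x i) \<longrightarrow> t \<in> {s \<in> KG K G. G_terminal G (EndS K G s)}"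
    using T by (intro exI[of _ m]) auto
qed auto

lemma dense_EndS_terminal:
  "KGtop K G closure_of {s \<in> KG K G. G_terminal G (EndS K G s)} = KG K G"
proof (rule antisym)
  show "KGtop K G closure_of {s \<in> KG K G. G_terminal G (EndS K G s)} \<subseteq> KG K G"
    using closure_of_subset_topspace[of "KGtop K G"] by simp
  show "KG K G \<subseteq> KGtop K G closure_of {s \<in> KG K G. G_terminal G (EndS K G s)}"
  proof (clarsimp simp: in_closure_of)
    fix x T assume x: "x \<in> KG K G" and T: "x \<in> T" "openin (KGtop K G) T"
    then obtain m where m: "\<forall>t\<in>KG K G. (\<forall>i<m. t i = x i) \<longrightarrow> t \<in> T"
      by (auto simp: openin_KGtop)
    obtain t where "t \<in> KG K G" "\<forall>i\<le>m. t i = x i" "G_terminal G (EndS K G t)"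
      using cylinder_meets_terminal[OF x, of m] by blast
    then show "\<exists>y. y \<in> KG K G \<and> G_terminal G (EndS K G y) \<and> y \<in> T" using m by auto
  qed
qed

end

theorem proposition3p1:
  fixes K :: "'a set" and G :: "('a \<times> 'a) set"
  assumes finK: "finite K"
    and GK: "G \<subseteq> K \<times> K"
    and domG: "Domain G = K"
  shows
    \<comment> \<open>(a)\<close>
    "(\<forall>s\<in>KG K G.
        (\<exists>!B. G_basic G B \<and> (\<exists>k. \<forall>i\<ge>k. s i \<in> B \<and> (shift ^^ i) s \<in> subG K G B)) \<and>
        omegaS K G s \<subseteq> subG K G (EndS K G s))
   \<and> \<comment> \<open>(b)\<close>
     (\<forall>B. G_basic G B \<longrightarrow> S_basic K G (subG K G B) \<and> top_transitive K G (subG K G B))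
   \<and> bij_betw (subG K G) {B. G_basic G B} {C. S_basic K G C}
   \<and> \<comment> \<open>(c)\<close>
     (\<forall>A. A \<subseteq> K \<longrightarrow>
        ((OG G `` A \<subseteq> A) \<longleftrightarrow> (\<forall>s\<in>KG K G. s \<in> subG K G A \<longleftrightarrow> s 0 \<in> A)) \<and>
        ((OG G `` A \<subseteq> A) \<longrightarrow>
            chainS K G `` subG K G A \<subseteq> subG K G A \<and>
            openin (KGtop K G) (subG K G A) \<and> closedin (KGtop K G) (subG K G A) \<and>
            openin (KGtop K G) {s \<in> KG K G. EndS K G s \<subseteq> A}))
   \<and> \<comment> \<open>(d)\<close>
     (\<forall>s\<in>K. \<exists>x\<in>KG K G. x 0 = s \<and> G_terminal G (EndS K G x))
   \<and> \<comment> \<open>(e)\<close>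
     (\<forall>B. G_basic G B \<longrightarrow>
        (G_terminal G B \<longleftrightarrow> S_terminal K G (subG K G B)) \<and>
        (G_terminal G B \<longleftrightarrow> visible K G (subG K G B)) \<and>
        (G_terminal G B \<longleftrightarrow> (openin (KGtop K G) (subG K G B) \<and> closedin (KGtop K G) (subG K G B))) \<and>
        (G_terminal G B \<longleftrightarrow> attractor K G (subG K G B)) \<and>
        (G_terminal G B \<longleftrightarrow> openin (KGtop K G) {s \<in> KG K G. EndS K G s = B}))
   \<and> \<comment> \<open>(f)\<close>
     (openin (KGtop K G) {s \<in> KG K G. G_terminal G (EndS K G s)} \<and>
      (KGtop K G) closure_of {s \<in> KG K G. G_terminal G (EndS K G s)} = KG K G)"
proof -
  interpret markov_shift K G using assms by unfold_locales
  show ?thesis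
    unfolding OG_eq_trancl
  proof (intro conjI ballI allI impI)
    fix B assume B: "G_basic G B"
    show "G_terminal G B \<longleftrightarrow> S_terminal K G (subG K G B)" by (rule G_terminal_iff_S_terminal[OF B])
    show "G_terminal G B \<longleftrightarrow> visible K G (subG K G B)" by (rule G_terminal_iff_visible[OF B])
    show "G_terminal G B \<longleftrightarrow> openin (KGtop K G) (subG K G B) \<and> closedin (KGtop K G) (subG K G B)"
      by (rule G_terminal_iff_clopen[OF B])
    show "G_terminal G B \<longleftrightarrow> attractor K G (subG K G B)" by (rule G_terminal_iff_attractor[OF B])
    show "G_terminal G B \<longleftrightarrow> openin (KGtop K G) {s \<in> KG K G. EndS K G s = B}"
      by (rule G_terminal_iff_openin_EndS_eq[OF B])
  qed (simp_all add: EndS_unique omegaS_subset_EndS S_basic_subG top_transitive_subG bij_betw_subG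
      invariant_iff_subG_initial chainS_image_invariant_subG clopen_invariant_subG
      openin_EndS_subset_invariant exists_KG_EndS_terminal openin_EndS_terminal dense_EndS_terminal)
qed

end
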